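(* For each $\alpha\in[0,\infty)$, the function $d^{\alpha}_{\mathcal{N},\mathrm{GP}}$ is a pseudometric on the collection of all measure networks; that is, for all measure networks $X,Y,Z$: $d^{\alpha}_{\mathcal{N},\mathrm{GP}}(X,Y)\ge0$, $d^{\alpha}_{\mathcal{N},\mathrm{GP}}(X,X)=0$, $d^{\alpha}_{\mathcal{N},\mathrm{GP}}(X,Y)=d^{\alpha}_{\mathcal{N},\mathrm{GP}}(Y,X)$, and $d^{\alpha}_{\mathcal{N},\mathrm{GP}}(X,Z)\le d^{\alpha}_{\mathcal{N},\mathrm{GP}}(X,Y)+d^{\alpha}_{\mathcal{N},\mathrm{GP}}(Y,Z)$.
   Context: A measure network is a triple $(X,\omega_X,\mu_X)$ where $X$ is a Polish space, $\mu_X$ is a fully supported Borel probability measure on $X$, and $\omega_X:X\times X\to\mathbb{R}$ is a bounded Borel measurable function. $\mathscr{C}(\mu_X,\mu_Y)$ denotes the set of Borel probability measures on $X\times Y$ with marginals $\mu_X$ and $\mu_Y$. For $\alpha\in[0,\infty)$ the network Gromov–Prokhorov distance is $d^{\alpha}_{\mathcal{N},\mathrm{GP}}(X,Y):=\frac12\inf_{\mu\in\mathscr{C}(\mu_X,\mu_Y)}\inf\{\varepsilon>0:\ \mu\otimes\mu(\{(x,y,x',y')\in(X\times Y)^2: |\omega_X(x,x')-\omega_Y(y,y')|\ge\varepsilon\})\le\alpha\varepsilon\}.$ *)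

theory Defs
  imports "HOL-Probability.Probability"
begin

text \<open>A measure network (X, omega, mu): X is a Polish space (rendered as a type of
class polish_space), mu a fully supported Borel probability measure on X, and
omega a bounded Borel measurable function on X \<times> X.\<close>

definition measure_network :: "('a::polish_space \<Rightarrow> 'a \<Rightarrow> real) \<Rightarrow> 'a measure \<Rightarrow> bool" where
  "measure_network \<omega> \<mu> \<longleftrightarrow>
     sets \<mu> = sets borel \<and> prob_space \<mu> \<and>
     (\<forall>U. open U \<and> U \<noteq> {} \<longrightarrow> emeasure \<mu> U > 0) \<and>
     (\<lambda>(x, y). \<omega> x y) \<in> borel_measurable borel \<and>
     (\<exists>C. \<forall>x y. \<bar>\<omega> x y\<bar> \<le> C)"

definition couplings :: "'a::polish_space measure \<Rightarrow> 'b::polish_space measure \<Rightarrow> ('a \<times> 'b) measure set" where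
  "couplings \<mu>X \<mu>Y = {\<mu>. sets \<mu> = sets borel \<and> prob_space \<mu> \<and>
       distr \<mu> borel fst = \<mu>X \<and> distr \<mu> borel snd = \<mu>Y}"

definition dNGP :: "real \<Rightarrow> ('a::polish_space \<Rightarrow> 'a \<Rightarrow> real) \<Rightarrow> 'a measure
                   \<Rightarrow> ('b::polish_space \<Rightarrow> 'b \<Rightarrow> real) \<Rightarrow> 'b measure \<Rightarrow> real" where
  "dNGP \<alpha> \<omega>X \<mu>X \<omega>Y \<mu>Y = (1/2) *
     (INF \<mu>\<in>couplings \<mu>X \<mu>Y.
        Inf {\<epsilon>::real. \<epsilon> > 0 \<and>
          measure (\<mu> \<Otimes>\<^sub>M \<mu>)
            {((x, y), (x', y')). \<epsilon> \<le> \<bar>\<omega>X x x' - \<omega>Y y y'\<bar>} \<le> \<alpha> * \<epsilon>})"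

end

(* Nonnegativity is immediate, the diagonal coupling of a network with itself has cost 0, and
   exchanging the coordinates of a coupling of (X, Y) gives a coupling of (Y, X) of the same
   cost.  For the triangle inequality, couplings of (X, Y) and of (Y, Z) are glued along their
   common marginal on Y into a law on X \<times> Y \<times> Z whose (X, Z)-marginal is a coupling of (X, Z).
   A pair that is (e1 + e2)-bad for X and Z is e1-bad for X and Y or e2-bad for Y and Z, so
   admissible radii add up.

   Gluing needs a disintegration of the first coupling P along its Y-marginal, built by hand on
   Polish spaces: the Radon-Nikodym derivatives of B \<mapsto> P (A \<times> B) give conditional probabilities of
   the sets A of a countable algebra that generates the Borel sets and contains, with each set,
   compact sets exhausting its measure.  For almost every y these conditional probabilities form
   a content that is inner regular for compact sets, hence countably additive, and Caratheodory's
   theorem extends it to the conditional distribution. *)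

theory Submission
  imports Defs
begin

lemma space_eq_UNIV_if_sets_borel: "sets M = sets borel \<Longrightarrow> space M = UNIV"
  using sets_eq_imp_space_eq[of M borel] by simp

lemma sets_borel_prod[measurable_cong]:
  "sets (borel :: ('a::second_countable_topology \<times> 'b::second_countable_topology) measure) =
   sets (borel \<Otimes>\<^sub>M borel)"
  by (metis borel_prod)

lemma Times_in_sets_borel[measurable]:
  "A \<in> sets borel \<Longrightarrow> B \<in> sets borel \<Longrightarrow>
   A \<times> B \<in> sets (borel :: ('a::second_countable_topology \<times> 'b::second_countable_topology) measure)"
  using pair_measureI[of A borel B borel] borel_prod by metis

lemma measurable_fst_borel[measurable]:
  "fst \<in> (borel :: ('a::second_countable_topology \<times> 'b::second_countable_topology) measure) \<rightarrow>\<^sub>M borel"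
  using measurable_fst[of "borel :: 'a measure" "borel :: 'b measure"] borel_prod by metis

lemma measurable_snd_borel[measurable]:
  "snd \<in> (borel :: ('a::second_countable_topology \<times> 'b::second_countable_topology) measure) \<rightarrow>\<^sub>M borel"
  using measurable_snd[of "borel :: 'a measure" "borel :: 'b measure"] borel_prod by metis

lemma measurable_Pair_borel[measurable]:
  assumes "f \<in> M \<rightarrow>\<^sub>M (borel :: 'a::second_countable_topology measure)"
    and "g \<in> M \<rightarrow>\<^sub>M (borel :: 'b::second_countable_topology measure)"
  shows "(\<lambda>x. (f x, g x)) \<in> M \<rightarrow>\<^sub>M (borel :: ('a \<times> 'b) measure)"
  using measurable_Pair[OF assms] borel_prod by metis

lemma borel_measure_eqI_rectangles:
  fixes M N :: "('a::second_countable_topology \<times> 'b::second_countable_topology) measure"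
  assumes M: "sets M = sets borel" and N: "sets N = sets borel" and fin: "emeasure M UNIV \<noteq> \<infinity>"
    and eq: "\<And>A B. A \<in> sets borel \<Longrightarrow> B \<in> sets borel \<Longrightarrow> emeasure M (A \<times> B) = emeasure N (A \<times> B)"
  shows "M = N"
proof -
  let ?E = "{A \<times> B | A B. A \<in> sets (borel :: 'a measure) \<and> B \<in> sets (borel :: 'b measure)}"
  have gen: "sets (borel :: ('a \<times> 'b) measure) = sigma_sets UNIV ?E"
    using sets_pair_measure[of "borel :: 'a measure" "borel :: 'b measure"] by (simp add: sets_borel_prod)
  show ?thesis
  proof (rule measure_eqI_generator_eq[where E = ?E and \<Omega> = UNIV and A = "\<lambda>_. UNIV"])
    show "Int_stable ?E"
      by (rule Int_stable_pair_measure_generator)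
    show "sets M = sigma_sets UNIV ?E" "sets N = sigma_sets UNIV ?E" using M N gen by simp_all
    have "UNIV \<in> ?E"
      using UNIV_Times_UNIV[symmetric] sets.top[of "borel :: 'a measure"] sets.top[of "borel :: 'b measure"]
      by (simp only: space_borel) blast
    then show "range (\<lambda>_. UNIV) \<subseteq> ?E" by auto
  next
    fix X assume "X \<in> ?E"
    then show "emeasure M X = emeasure N X" using eq by blast
  qed (use fin in auto)
qed

section \<open>Contents that are inner regular for compact sets\<close>

lemma compact_family_Inter_empty_finite:
  fixes K :: "nat \<Rightarrow> 'a::t2_space set"
  assumes K: "\<And>i. compact (K i)" and empty: "(\<Inter>i. K i) = {}"
  shows "\<exists>n. (\<Inter>i\<le>n. K i) = {}"
proof -
  obtain I where I: "finite I" "K 0 \<inter> (\<Inter>i\<in>I. K i) = {}"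
    using compact_imp_fip_image[OF K[of 0], of UNIV K] K empty compact_imp_closed by auto
  have "insert 0 I \<subseteq> {..Max (insert 0 I)}" using I(1) by auto
  then have "(\<Inter>i\<le>Max (insert 0 I). K i) = {}" using I(2) by blast
  then show ?thesis ..
qed

lemma content_le_sum_inner_defects:
  fixes A :: "'a::t2_space set set" and m :: "'a set \<Rightarrow> ennreal"
  assumes alg: "algebra UNIV A" and pos: "positive A m" and add: "additive A m"
    and K: "\<And>i. K i \<in> A" "\<And>i. compact (K i)" "\<And>i. K i \<subseteq> X i"
    and X: "range X \<subseteq> A" "decseq X" "(\<Inter>i. X i) = {}"
  shows "\<exists>n. m (X n) \<le> (\<Sum>i\<le>n. m (X i - K i))"
proof -
  interpret algebra UNIV A by fact
  have XA: "X i \<in> A" for i using X(1) by auto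
  have "(\<Inter>i. K i) \<subseteq> (\<Inter>i. X i)" using K(3) by blast
  then have "(\<Inter>i. K i) = {}" using X(3) by simp
  then have "\<exists>n. (\<Inter>i\<le>n. K i) = {}" by (rule compact_family_Inter_empty_finite[OF K(2)])
  then obtain n where n: "(\<Inter>i\<le>n. K i) = {}" ..
  have UA: "(\<Union>i\<le>n. X i - K i) \<in> A"
    by (induction n) (auto simp: atMost_Suc intro!: Un Diff XA K(1))
  have "X n \<subseteq> (\<Union>i\<le>n. X i - K i)"
  proof
    fix x assume x: "x \<in> X n"
    from n obtain i where "i \<le> n" "x \<notin> K i" by (metis INT_I atMost_iff empty_iff)
    then show "x \<in> (\<Union>i\<le>n. X i - K i)" using x X(2) by (auto simp: decseq_def)
  qed
  then have "m (X n) \<le> m (\<Union>i\<le>n. X i - K i)"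
    using additive_increasing[OF pos add] XA UA by (auto simp: increasing_def)
  also have "\<dots> \<le> (\<Sum>i\<le>n. m (X i - K i))"
    by (rule subadditive[OF pos add]) (auto simp: XA K(1))
  finally show ?thesis ..
qed

lemma content_continuous_if_compact_inner_regular:
  fixes A :: "'a::t2_space set set" and m :: "'a set \<Rightarrow> ennreal"
  assumes alg: "algebra UNIV A" and pos: "positive A m" and add: "additive A m"
    and fin: "\<And>X. X \<in> A \<Longrightarrow> m X \<noteq> \<infinity>"
    and inner: "\<And>X e. X \<in> A \<Longrightarrow> e > 0 \<Longrightarrow> \<exists>K\<in>A. compact K \<and> K \<subseteq> X \<and> m X \<le> m K + ennreal e"
    and X: "range X \<subseteq> A" "decseq X" "(\<Inter>i. X i) = {}"
  shows "(\<lambda>i. m (X i)) \<longlonglongrightarrow> 0"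
proof -
  interpret algebra UNIV A by fact
  have XA: "X i \<in> A" for i using X(1) by auto
  have "antimono (\<lambda>i. m (X i))"
    using X(2) additive_increasing[OF pos add] XA by (auto simp: antimono_def decseq_def increasing_def)
  then have lim: "(\<lambda>i. m (X i)) \<longlonglongrightarrow> (INF i. m (X i))" by (rule LIMSEQ_INF)
  have "(INF i. m (X i)) \<le> 0 + ennreal \<epsilon>" if "\<epsilon> > 0" for \<epsilon>
  proof -
    define e where "e i = \<epsilon> / 2 ^ Suc i" for i
    have e_pos: "e i > 0" for i using \<open>\<epsilon> > 0\<close> by (simp add: e_def)
    have "(\<Sum>i\<le>n. e i) = \<epsilon> * (1 - 1 / 2 ^ Suc n)" for n
      by (induction n) (auto simp: e_def field_simps)
    then have e_sum: "(\<Sum>i\<le>n. e i) \<le> \<epsilon>" for n using \<open>\<epsilon> > 0\<close> by simp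
    have "\<forall>i. \<exists>K. K \<in> A \<and> compact K \<and> K \<subseteq> X i \<and> m (X i) \<le> m K + ennreal (e i)"
      using inner[OF XA e_pos] by blast
    then obtain K where K: "\<And>i. K i \<in> A" "\<And>i. compact (K i)" "\<And>i. K i \<subseteq> X i"
      and approx: "\<And>i. m (X i) \<le> m (K i) + ennreal (e i)"
      by metis
    have defect: "m (X i - K i) \<le> ennreal (e i)" for i
    proof -
      have "m (K i) + m (X i - K i) = m (X i)"
        using K(3)[of i] additiveD[OF add, of "K i" "X i - K i"] K(1) XA Diff by (auto simp: Un_absorb1)
      then have "m (K i) + m (X i - K i) \<le> m (K i) + ennreal (e i)" using approx[of i] by simp
      then show ?thesis using fin[OF K(1)] by (simp add: ennreal_add_left_cancel_le)
    qed
    obtain n where "m (X n) \<le> (\<Sum>i\<le>n. m (X i - K i))"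
      using content_le_sum_inner_defects[OF alg pos add K X] by blast
    also have "\<dots> \<le> (\<Sum>i\<le>n. ennreal (e i))" by (intro sum_mono defect)
    also have "\<dots> = ennreal (\<Sum>i\<le>n. e i)" using e_pos by (simp add: less_imp_le sum_ennreal)
    also have "\<dots> \<le> ennreal \<epsilon>" by (intro ennreal_leI e_sum)
    finally show ?thesis by (simp add: INF_lower2)
  qed
  then have "(INF i. m (X i)) \<le> 0" by (rule ennreal_le_epsilon)
  then have "(INF i. m (X i)) = 0" by (simp only: le_zero_eq)
  with lim show ?thesis by simp
qed

lemma AE_eq_if_AE_le_nn_integral_eq:
  assumes f: "f \<in> borel_measurable M" and g: "g \<in> borel_measurable M"
    and le: "AE x in M. g x \<le> f x"
    and eq: "(\<integral>\<^sup>+ x. f x \<partial>M) = (\<integral>\<^sup>+ x. g x \<partial>M)" and fin: "(\<integral>\<^sup>+ x. g x \<partial>M) \<noteq> \<infinity>"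
  shows "AE x in M. f x = g x"
proof -
  have "(\<integral>\<^sup>+ x. g x \<partial>M) + (\<integral>\<^sup>+ x. f x - g x \<partial>M) = (\<integral>\<^sup>+ x. g x + (f x - g x) \<partial>M)"
    using f g by (intro nn_integral_add[symmetric]) auto
  also have "\<dots> = (\<integral>\<^sup>+ x. f x \<partial>M)"
    using le by (intro nn_integral_cong_AE) (auto simp: add_diff_inverse_ennreal)
  finally have "(\<integral>\<^sup>+ x. f x - g x \<partial>M) = 0"
    using eq fin by (simp add: ennreal_add_left_cancel[where b = 0, simplified])
  then have "AE x in M. f x - g x = 0" using f g by (subst (asm) nn_integral_0_iff_AE) auto
  with le show ?thesis by eventually_elim (metis add_diff_inverse_ennreal add_0_right)
qed

section \<open>Disintegration of Borel probability measures on Polish spaces\<close>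

locale borel_pair_prob = prob_space P
  for P :: "('a::polish_space \<times> 'b::second_countable_topology) measure" +
  assumes sets_P: "sets P = sets borel"
begin

definition marg_fst :: "'a measure" where "marg_fst = distr P borel fst"
definition marg_snd :: "'b measure" where "marg_snd = distr P borel snd"

definition rect_measure :: "'a set \<Rightarrow> 'b measure" where
  "rect_measure A = distr (density P (indicator (A \<times> UNIV))) borel snd"

text \<open>\<^term>\<open>cond_prob A y\<close> is the conditional probability of \<^term>\<open>A\<close> given that the second
  coordinate is \<^term>\<open>y\<close>; being a Radon-Nikodym derivative, it is determined only up to a
  null set that depends on \<^term>\<open>A\<close>.\<close>

definition cond_prob :: "'a set \<Rightarrow> 'b \<Rightarrow> ennreal" where
  "cond_prob A = RN_deriv marg_snd (rect_measure A)"

lemma space_P[simp]: "space P = UNIV"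
  by (rule space_eq_UNIV_if_sets_borel[OF sets_P])

lemma sets_P_iff[measurable_cong]: "S \<in> sets P \<longleftrightarrow> S \<in> sets borel"
  using sets_P by simp

lemma Times_in_events[intro, simp]: "A \<in> sets borel \<Longrightarrow> B \<in> sets borel \<Longrightarrow> A \<times> B \<in> sets P"
  by (simp add: sets_P Times_in_sets_borel)

lemma measurable_P[simp]: "measurable P N = measurable borel N"
  by (rule measurable_cong_sets[OF sets_P refl])

lemma sets_marg_snd[simp, measurable_cong]: "sets marg_snd = sets borel"
  by (simp add: marg_snd_def)

lemma space_marg_snd[simp]: "space marg_snd = UNIV"
  by (simp add: marg_snd_def)

lemma sets_marg_fst[simp, measurable_cong]: "sets marg_fst = sets borel"
  by (simp add: marg_fst_def)

lemma prob_space_marg_snd: "prob_space marg_snd"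
  unfolding marg_snd_def by (rule prob_space_distr) (simp add: measurable_snd_borel)

lemma prob_space_marg_fst: "prob_space marg_fst"
  unfolding marg_fst_def by (rule prob_space_distr) (simp add: measurable_fst_borel)

lemma emeasure_marg_fst: "A \<in> sets borel \<Longrightarrow> emeasure marg_fst A = emeasure P (A \<times> UNIV)"
  unfolding marg_fst_def by (subst emeasure_distr) (auto simp: vimage_fst measurable_fst_borel)

lemma emeasure_marg_snd: "B \<in> sets borel \<Longrightarrow> emeasure marg_snd B = emeasure P (UNIV \<times> B)"
  unfolding marg_snd_def by (subst emeasure_distr) (auto simp: vimage_snd measurable_snd_borel)

lemma sets_rect_measure[simp]: "sets (rect_measure A) = sets borel"
  by (simp add: rect_measure_def)

lemma emeasure_rect_measure:
  assumes A: "A \<in> sets borel" and B: "B \<in> sets borel"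
  shows "emeasure (rect_measure A) B = emeasure P (A \<times> B)"
proof -
  have "emeasure (rect_measure A) B = emeasure (density P (indicator (A \<times> UNIV))) (snd -` B)"
    unfolding rect_measure_def using B by (subst emeasure_distr) (auto simp: measurable_snd_borel)
  also have "\<dots> = (\<integral>\<^sup>+ x. indicator (A \<times> UNIV) x * indicator (snd -` B) x \<partial>P)"
    using A B by (subst emeasure_density) (auto simp: vimage_snd)
  also have "\<dots> = (\<integral>\<^sup>+ x. indicator (A \<times> B) x \<partial>P)"
    by (intro nn_integral_cong) (auto split: split_indicator)
  also have "\<dots> = emeasure P (A \<times> B)"
    using A B by (intro nn_integral_indicator) simp
  finally show ?thesis .
qed

lemma borel_measurable_cond_prob[measurable]: "cond_prob A \<in> borel_measurable marg_snd"
  unfolding cond_prob_def by (rule borel_measurable_RN_deriv)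

lemma borel_measurable_cond_prob_borel[measurable]: "cond_prob A \<in> borel_measurable borel"
  using borel_measurable_cond_prob measurable_cong_sets[OF sets_marg_snd refl] by blast

lemma density_cond_prob:
  assumes A: "A \<in> sets borel"
  shows "density marg_snd (cond_prob A) = rect_measure A"
proof -
  interpret marg_snd: prob_space marg_snd by (rule prob_space_marg_snd)
  have "absolutely_continuous marg_snd (rect_measure A)"
    unfolding absolutely_continuous_def
  proof
    fix B assume "B \<in> null_sets marg_snd"
    then have B: "B \<in> sets borel" "emeasure P (UNIV \<times> B) = 0"
      by (auto simp: null_sets_def emeasure_marg_snd)
    have "emeasure P (A \<times> B) \<le> emeasure P (UNIV \<times> B)"
      using A B by (intro emeasure_mono) auto
    then show "B \<in> null_sets (rect_measure A)" using A B by (simp add: emeasure_rect_measure null_sets_def)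
  qed
  then show ?thesis unfolding cond_prob_def by (rule marg_snd.density_RN_deriv) simp
qed

lemma nn_integral_cond_prob:
  assumes A: "A \<in> sets borel" and B: "B \<in> sets borel"
  shows "(\<integral>\<^sup>+ y \<in> B. cond_prob A y \<partial>marg_snd) = emeasure P (A \<times> B)"
proof -
  have "(\<integral>\<^sup>+ y \<in> B. cond_prob A y \<partial>marg_snd) = emeasure (density marg_snd (cond_prob A)) B"
    using B by (subst emeasure_density) (auto simp: mult.commute)
  then show ?thesis using A B by (simp add: density_cond_prob emeasure_rect_measure)
qed

lemma nn_integral_cond_prob_UNIV:
  "A \<in> sets borel \<Longrightarrow> (\<integral>\<^sup>+ y. cond_prob A y \<partial>marg_snd) = emeasure marg_fst A"
  using nn_integral_cond_prob[of A UNIV] by (simp add: emeasure_marg_fst)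

lemma cond_prob_AE_eqI:
  assumes g: "g \<in> borel_measurable borel" and A: "A \<in> sets borel"
    and eq: "\<And>B. B \<in> sets borel \<Longrightarrow> (\<integral>\<^sup>+ y \<in> B. g y \<partial>marg_snd) = emeasure P (A \<times> B)"
  shows "AE y in marg_snd. cond_prob A y = g y"
proof -
  interpret marg_snd: prob_space marg_snd by (rule prob_space_marg_snd)
  show ?thesis
  proof (rule marg_snd.density_unique2)
    show "g \<in> borel_measurable marg_snd" using g measurable_cong_sets[OF sets_marg_snd refl] by blast
  qed (auto simp: nn_integral_cond_prob A eq)
qed

lemma cond_prob_Un_AE:
  assumes A: "A \<in> sets borel" and B: "B \<in> sets borel" and disj: "A \<inter> B = {}"
  shows "AE y in marg_snd. cond_prob (A \<union> B) y = cond_prob A y + cond_prob B y"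
proof (rule cond_prob_AE_eqI)
  fix C :: "'b set" assume C: "C \<in> sets borel"
  have "(\<integral>\<^sup>+ y \<in> C. cond_prob A y + cond_prob B y \<partial>marg_snd) =
      (\<integral>\<^sup>+ y \<in> C. cond_prob A y \<partial>marg_snd) + (\<integral>\<^sup>+ y \<in> C. cond_prob B y \<partial>marg_snd)"
    using C by (subst nn_integral_add[symmetric]) (auto intro!: nn_integral_cong simp: distrib_right)
  also have "\<dots> = emeasure P (A \<times> C) + emeasure P (B \<times> C)"
    using A B C by (simp add: nn_integral_cond_prob)
  also have "\<dots> = emeasure P (A \<times> C \<union> B \<times> C)"
    using A B C disj by (intro plus_emeasure) (auto simp: sets_P intro: Times_in_sets_borel)
  also have "A \<times> C \<union> B \<times> C = (A \<union> B) \<times> C" by auto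
  finally show "(\<integral>\<^sup>+ y \<in> C. cond_prob A y + cond_prob B y \<partial>marg_snd) = emeasure P ((A \<union> B) \<times> C)" .
qed (use A B in auto)

lemma cond_prob_UNIV_AE: "AE y in marg_snd. cond_prob UNIV y = 1"
  by (rule cond_prob_AE_eqI) (auto simp: emeasure_marg_snd)

lemma cond_prob_mono_AE:
  assumes A: "A \<in> sets borel" and B: "B \<in> sets borel" and sub: "A \<subseteq> B"
  shows "AE y in marg_snd. cond_prob A y \<le> cond_prob B y"
proof -
  have "A \<union> (B - A) = B" using sub by auto
  then show ?thesis using cond_prob_Un_AE[of A "B - A"] A B by auto
qed

lemma exists_inner_compact:
  assumes A: "A \<in> sets borel" and e: "e > 0"
  shows "\<exists>K. compact K \<and> K \<subseteq> A \<and> emeasure marg_fst A \<le> emeasure marg_fst K + ennreal e"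
proof -
  interpret marg_fst: prob_space marg_fst by (rule prob_space_marg_fst)
  have eq: "emeasure marg_fst A = (SUP K \<in> {K. K \<subseteq> A \<and> compact K}. emeasure marg_fst K)"
    by (rule inner_regular) (auto simp: A)
  have "\<exists>K \<in> {K. K \<subseteq> A \<and> compact K}. emeasure marg_fst A < emeasure marg_fst K + ennreal e"
    by (rule SUP_approx_ennreal[OF e _ eq]) auto
  then show ?thesis by (auto intro: less_imp_le)
qed

definition inner_compact_choice :: "'a set \<Rightarrow> nat \<Rightarrow> 'a set" where
  "inner_compact_choice A j = (SOME K. compact K \<and> K \<subseteq> A \<and>
     emeasure marg_fst A \<le> emeasure marg_fst K + ennreal (1 / Suc j))"

definition inner_compact :: "'a set \<Rightarrow> nat \<Rightarrow> 'a set" where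
  "inner_compact A m = (\<Union>j\<le>m. inner_compact_choice A j)"

lemma inner_compact_choice:
  assumes "A \<in> sets borel"
  shows "compact (inner_compact_choice A j) \<and> inner_compact_choice A j \<subseteq> A \<and>
    emeasure marg_fst A \<le> emeasure marg_fst (inner_compact_choice A j) + ennreal (1 / Suc j)"
  unfolding inner_compact_choice_def by (rule someI_ex) (rule exists_inner_compact[OF assms], simp)

lemma compact_inner_compact:
  assumes "A \<in> sets borel"
  shows "compact (inner_compact A m)"
  unfolding inner_compact_def by (rule compact_UN) (use inner_compact_choice[OF assms] in auto)

lemma inner_compact_subset: "A \<in> sets borel \<Longrightarrow> inner_compact A m \<subseteq> A"
  unfolding inner_compact_def using inner_compact_choice[of A] by blast

lemma inner_compact_in_sets: "A \<in> sets borel \<Longrightarrow> inner_compact A m \<in> sets borel"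
  using compact_inner_compact by (simp add: borel_closed compact_imp_closed)

lemma incseq_inner_compact: "incseq (inner_compact A)"
  unfolding inner_compact_def by (intro monoI UN_mono) auto

lemma emeasure_inner_compact_approx:
  assumes A: "A \<in> sets borel"
  shows "emeasure marg_fst A \<le> emeasure marg_fst (inner_compact A m) + ennreal (1 / Suc m)"
proof -
  have "emeasure marg_fst (inner_compact_choice A m) \<le> emeasure marg_fst (inner_compact A m)"
    using inner_compact_in_sets[OF A] by (intro emeasure_mono) (auto simp: inner_compact_def)
  then show ?thesis using inner_compact_choice[OF A, of m] by (meson add_right_mono order_trans)
qed

lemma SUP_emeasure_inner_compact:
  assumes A: "A \<in> sets borel"
  shows "(SUP m. emeasure marg_fst (inner_compact A m)) = emeasure marg_fst A"
proof (rule antisym)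
  show "(SUP m. emeasure marg_fst (inner_compact A m)) \<le> emeasure marg_fst A"
    using A inner_compact_subset by (intro SUP_least emeasure_mono) auto
  show "emeasure marg_fst A \<le> (SUP m. emeasure marg_fst (inner_compact A m))"
  proof (rule ennreal_le_epsilon)
    fix e :: real assume "0 < e"
    then obtain m :: nat where m: "1 / Suc m < e" by (metis nat_approx_posE)
    have "emeasure marg_fst A \<le> emeasure marg_fst (inner_compact A m) + ennreal (1 / Suc m)"
      by (rule emeasure_inner_compact_approx[OF A])
    also have "\<dots> \<le> (SUP m. emeasure marg_fst (inner_compact A m)) + ennreal e"
      using m by (intro add_mono SUP_upper ennreal_leI) auto
    finally show "emeasure marg_fst A \<le> (SUP m. emeasure marg_fst (inner_compact A m)) + ennreal e" .
  qed
qed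

definition countable_basis :: "'a set set" where
  "countable_basis = (SOME B. countable B \<and> topological_basis B)"

lemma countable_basis: "countable countable_basis" "topological_basis countable_basis"
  using someI_ex[OF ex_countable_basis] unfolding countable_basis_def by auto

definition basis_set :: "nat \<Rightarrow> 'a set" where
  "basis_set n = from_nat_into (insert {} countable_basis) n"

lemma open_basis_set: "open (basis_set n)"
proof -
  have "basis_set n \<in> insert {} countable_basis"
    unfolding basis_set_def by (rule from_nat_into) simp
  then show ?thesis using countable_basis topological_basis_open by auto
qed

end

text \<open>Describing the members of the algebra by terms makes its countability immediate.\<close>

datatype set_expr = Basis_Expr nat | Compl_Expr set_expr | Un_Expr set_expr set_expr
  | Inner_Compact_Expr set_expr nat

instance set_expr :: countable by countable_datatype

context borel_pair_prob
begin

primrec set_of_expr :: "set_expr \<Rightarrow> 'a set" where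
  "set_of_expr (Basis_Expr n) = basis_set n"
| "set_of_expr (Compl_Expr t) = - set_of_expr t"
| "set_of_expr (Un_Expr s t) = set_of_expr s \<union> set_of_expr t"
| "set_of_expr (Inner_Compact_Expr t m) = inner_compact (set_of_expr t) m"

definition gen_algebra :: "'a set set" where "gen_algebra = range set_of_expr"

lemma set_of_expr_in_sets: "set_of_expr t \<in> sets borel"
  by (induction t) (auto simp: open_basis_set inner_compact_in_sets)

lemma gen_algebra_in_sets: "S \<in> gen_algebra \<Longrightarrow> S \<in> sets borel"
  unfolding gen_algebra_def using set_of_expr_in_sets by auto

lemma countable_gen_algebra: "countable gen_algebra"
  unfolding gen_algebra_def by simp

lemma inner_compact_in_gen_algebra: "S \<in> gen_algebra \<Longrightarrow> inner_compact S m \<in> gen_algebra"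
  unfolding gen_algebra_def by (auto intro: range_eqI[where x = "Inner_Compact_Expr _ m"])

lemma Compl_in_gen_algebra: "S \<in> gen_algebra \<Longrightarrow> - S \<in> gen_algebra"
  unfolding gen_algebra_def by (auto intro: range_eqI[where x = "Compl_Expr _"])

lemma Un_in_gen_algebra: "S \<in> gen_algebra \<Longrightarrow> T \<in> gen_algebra \<Longrightarrow> S \<union> T \<in> gen_algebra"
  unfolding gen_algebra_def by (auto intro: range_eqI[where x = "Un_Expr _ _"])

lemma UNIV_in_gen_algebra: "UNIV \<in> gen_algebra"
  unfolding gen_algebra_def
  by (rule range_eqI[where x = "Un_Expr (Basis_Expr 0) (Compl_Expr (Basis_Expr 0))"]) auto

lemma Int_in_gen_algebra: "S \<in> gen_algebra \<Longrightarrow> T \<in> gen_algebra \<Longrightarrow> S \<inter> T \<in> gen_algebra"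
  using Compl_in_gen_algebra[OF Un_in_gen_algebra[OF Compl_in_gen_algebra Compl_in_gen_algebra]]
  by simp

lemma algebra_gen_algebra: "algebra UNIV gen_algebra"
  unfolding algebra_iff_Un
  using Compl_in_gen_algebra[OF UNIV_in_gen_algebra] Compl_in_gen_algebra Un_in_gen_algebra
  by (auto simp: Compl_eq_Diff_UNIV[symmetric])

lemma Int_stable_gen_algebra: "Int_stable gen_algebra"
  unfolding Int_stable_def using Int_in_gen_algebra by blast

lemma sigma_gen_algebra: "sigma_sets UNIV gen_algebra = sets borel"
proof
  show "sigma_sets UNIV gen_algebra \<subseteq> sets borel"
    using sets.sigma_sets_subset[of gen_algebra borel] gen_algebra_in_sets by auto
  have "countable_basis \<subseteq> range basis_set"
    unfolding basis_set_def using subset_range_from_nat_into[of "insert {} countable_basis"]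
      countable_basis(1) by auto
  also have "range basis_set \<subseteq> gen_algebra"
    unfolding gen_algebra_def by (auto intro: range_eqI[where x = "Basis_Expr _"])
  finally have "sigma_sets UNIV countable_basis \<subseteq> sigma_sets UNIV gen_algebra"
    by (rule sigma_sets_subseteq)
  moreover have "sets borel = sigma_sets UNIV countable_basis"
    by (subst borel_eq_countable_basis[OF countable_basis]) (simp add: sets_measure_of)
  ultimately show "sets borel \<subseteq> sigma_sets UNIV gen_algebra" by simp
qed

lemma cond_prob_inner_compact_AE:
  assumes A: "A \<in> gen_algebra"
  shows "AE y in marg_snd. (SUP m. cond_prob (inner_compact A m) y) = cond_prob A y"
proof -
  have A_sets: "A \<in> sets borel" by (rule gen_algebra_in_sets[OF A])
  have K_sets: "inner_compact A m \<in> sets borel" for m by (rule inner_compact_in_sets[OF A_sets])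
  have inc: "AE y in marg_snd. cond_prob (inner_compact A m) y \<le> cond_prob (inner_compact A (Suc m)) y" for m
    using K_sets incseq_inner_compact by (intro cond_prob_mono_AE) (auto simp: incseq_Suc_iff)
  have "AE y in marg_snd. \<forall>m. cond_prob (inner_compact A m) y \<le> cond_prob A y"
    unfolding AE_all_countable using K_sets A_sets inner_compact_subset[OF A_sets]
    by (auto intro!: cond_prob_mono_AE)
  then have le: "AE y in marg_snd. (SUP m. cond_prob (inner_compact A m) y) \<le> cond_prob A y"
    by eventually_elim (auto intro: SUP_least)
  have "(\<integral>\<^sup>+ y. (SUP m. cond_prob (inner_compact A m) y) \<partial>marg_snd) =
      (SUP m. \<integral>\<^sup>+ y. cond_prob (inner_compact A m) y \<partial>marg_snd)"
    using inc by (intro nn_integral_monotone_convergence_SUP_AE[of "\<lambda>m. cond_prob (inner_compact A m)"]) auto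
  also have "\<dots> = emeasure marg_fst A"
    using K_sets by (simp add: nn_integral_cond_prob_UNIV SUP_emeasure_inner_compact[OF A_sets])
  finally have eq: "(\<integral>\<^sup>+ y. (SUP m. cond_prob (inner_compact A m) y) \<partial>marg_snd) = emeasure marg_fst A" .
  have "emeasure marg_fst A \<noteq> \<infinity>"
    using prob_space.emeasure_le_1[OF prob_space_marg_fst, of A] by (auto simp: top_unique)
  moreover have "(\<lambda>y. SUP m. cond_prob (inner_compact A m) y) \<in> borel_measurable marg_snd"
    by measurable
  ultimately have "AE y in marg_snd. cond_prob A y = (SUP m. cond_prob (inner_compact A m) y)"
    using eq le nn_integral_cond_prob_UNIV[OF A_sets]
    by (intro AE_eq_if_AE_le_nn_integral_eq) simp_all
  then show ?thesis by eventually_elim simp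
qed

definition regular_point :: "'b \<Rightarrow> bool" where
  "regular_point y \<longleftrightarrow> cond_prob UNIV y = 1 \<and>
     (\<forall>A\<in>gen_algebra. \<forall>B\<in>gen_algebra. A \<inter> B = {} \<longrightarrow> cond_prob (A \<union> B) y = cond_prob A y + cond_prob B y) \<and>
     (\<forall>A\<in>gen_algebra. (SUP m. cond_prob (inner_compact A m) y) = cond_prob A y)"

lemma AE_regular_point: "AE y in marg_snd. regular_point y"
proof -
  have "AE y in marg_snd. \<forall>A\<in>gen_algebra. \<forall>B\<in>gen_algebra. A \<inter> B = {} \<longrightarrow>
      cond_prob (A \<union> B) y = cond_prob A y + cond_prob B y"
    using countable_gen_algebra gen_algebra_in_sets
    by (auto simp: AE_ball_countable intro!: cond_prob_Un_AE)
  moreover have "AE y in marg_snd. \<forall>A\<in>gen_algebra. (SUP m. cond_prob (inner_compact A m) y) = cond_prob A y"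
    using countable_gen_algebra by (auto simp: AE_ball_countable intro!: cond_prob_inner_compact_AE)
  ultimately show ?thesis using cond_prob_UNIV_AE unfolding regular_point_def by eventually_elim auto
qed

lemma regular_point_extends_to_measure:
  assumes "regular_point y"
  shows "\<exists>\<mu>. (\<forall>A\<in>gen_algebra. \<mu> A = cond_prob A y) \<and> measure_space UNIV (sigma_sets UNIV gen_algebra) \<mu>"
proof -
  interpret algebra UNIV gen_algebra by (rule algebra_gen_algebra)
  from assms have total: "cond_prob UNIV y = 1"
    and additive: "\<And>A B. A \<in> gen_algebra \<Longrightarrow> B \<in> gen_algebra \<Longrightarrow> A \<inter> B = {} \<Longrightarrow>
      cond_prob (A \<union> B) y = cond_prob A y + cond_prob B y"
    and inner: "\<And>A. A \<in> gen_algebra \<Longrightarrow> (SUP m. cond_prob (inner_compact A m) y) = cond_prob A y"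
    unfolding regular_point_def by auto
  have fin: "cond_prob A y \<noteq> \<infinity>" if A: "A \<in> gen_algebra" for A
  proof -
    have "cond_prob A y \<le> cond_prob A y + cond_prob (- A) y" by simp
    also have "\<dots> = 1" using A total additive[OF A Compl_in_gen_algebra[OF A]] by simp
    finally show ?thesis by (auto simp: top_unique)
  qed
  have "cond_prob {} y + cond_prob {} y = cond_prob {} y + 0"
    using additive[OF empty_sets empty_sets] by simp
  then have "cond_prob {} y = 0" using fin[OF empty_sets] by (simp only: ennreal_add_left_cancel) auto
  then have pos: "positive gen_algebra (\<lambda>A. cond_prob A y)" unfolding positive_def by simp
  have add: "additive gen_algebra (\<lambda>A. cond_prob A y)" unfolding additive_def using additive by blast
  have approx: "\<exists>K\<in>gen_algebra. compact K \<and> K \<subseteq> A \<and> cond_prob A y \<le> cond_prob K y + ennreal e"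
    if A: "A \<in> gen_algebra" and e: "e > 0" for A e
  proof -
    obtain m where "cond_prob A y < cond_prob (inner_compact A m) y + ennreal e"
      using SUP_approx_ennreal[OF e _ inner[OF A, symmetric] fin[OF A]] by auto
    moreover have "inner_compact A m \<in> gen_algebra" "compact (inner_compact A m)" "inner_compact A m \<subseteq> A"
      using A by (simp_all add: inner_compact_in_gen_algebra compact_inner_compact inner_compact_subset
          gen_algebra_in_sets)
    ultimately show ?thesis by (blast dest: less_imp_le)
  qed
  show ?thesis
    by (rule caratheodory_empty_continuous[OF pos add fin content_continuous_if_compact_inner_regular
          [OF algebra_gen_algebra pos add fin approx]])
qed

definition exceptional_set :: "'b set" where
  "exceptional_set = (SOME N. {y. \<not> regular_point y} \<subseteq> N \<and> N \<in> null_sets marg_snd)"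

lemma exceptional_set: "{y. \<not> regular_point y} \<subseteq> exceptional_set" "exceptional_set \<in> null_sets marg_snd"
proof -
  obtain N where "{y \<in> space marg_snd. \<not> regular_point y} \<subseteq> N" "emeasure marg_snd N = 0" "N \<in> sets marg_snd"
    using AE_regular_point by (rule AE_E)
  then have "{y. \<not> regular_point y} \<subseteq> N" "N \<in> null_sets marg_snd" by auto
  then have "\<exists>N. {y. \<not> regular_point y} \<subseteq> N \<and> N \<in> null_sets marg_snd" by blast
  from someI_ex[OF this] show "{y. \<not> regular_point y} \<subseteq> exceptional_set" "exceptional_set \<in> null_sets marg_snd"
    unfolding exceptional_set_def by auto
qed

lemma regular_point_if_not_exceptional: "y \<notin> exceptional_set \<Longrightarrow> regular_point y"
  using exceptional_set(1) by blast

lemma exceptional_set_in_sets: "exceptional_set \<in> sets borel"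
  using exceptional_set(2) by (auto simp: null_sets_def)

definition cond_content :: "'b \<Rightarrow> 'a set \<Rightarrow> ennreal" where
  "cond_content y = (SOME \<mu>. (\<forall>A\<in>gen_algebra. \<mu> A = cond_prob A y) \<and>
     measure_space UNIV (sigma_sets UNIV gen_algebra) \<mu>)"

text \<open>On the exceptional null set any probability measure would do; the first marginal is used.\<close>

definition cond_kernel :: "'b \<Rightarrow> 'a measure" where
  "cond_kernel y = (if y \<in> exceptional_set then marg_fst
     else measure_of UNIV (sigma_sets UNIV gen_algebra) (cond_content y))"

lemma cond_content:
  assumes "y \<notin> exceptional_set"
  shows "(\<forall>A\<in>gen_algebra. cond_content y A = cond_prob A y) \<and>
    measure_space UNIV (sigma_sets UNIV gen_algebra) (cond_content y)"
  unfolding cond_content_def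
  by (rule someI_ex[OF regular_point_extends_to_measure[OF regular_point_if_not_exceptional[OF assms]]])

lemma sets_cond_kernel[simp]: "sets (cond_kernel y) = sets borel"
proof -
  have "sets (measure_of UNIV (sigma_sets UNIV gen_algebra) (cond_content y)) =
      sigma_sets UNIV (sigma_sets UNIV gen_algebra)"
    by (rule sets_measure_of) simp
  also have "\<dots> = sets borel"
    using sets.sigma_sets_eq[of borel] by (simp add: sigma_sets_sigma_sets_eq sigma_gen_algebra)
  finally show ?thesis by (simp add: cond_kernel_def)
qed

lemma emeasure_cond_kernel:
  assumes y: "y \<notin> exceptional_set" and A: "A \<in> gen_algebra"
  shows "emeasure (cond_kernel y) A = cond_prob A y"
  using cond_content[OF y] y A
  by (simp add: cond_kernel_def measure_space_def emeasure_measure_of_sigma sigma_sets.Basic)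

lemma prob_space_cond_kernel: "prob_space (cond_kernel y)"
proof (cases "y \<in> exceptional_set")
  case True
  then show ?thesis using prob_space_marg_fst by (simp add: cond_kernel_def)
next
  case False
  have "space (cond_kernel y) = UNIV" by (simp add: space_eq_UNIV_if_sets_borel)
  then have "emeasure (cond_kernel y) (space (cond_kernel y)) = cond_prob UNIV y"
    using emeasure_cond_kernel[OF False UNIV_in_gen_algebra] by simp
  also have "\<dots> = 1"
    using regular_point_if_not_exceptional[OF False] by (simp add: regular_point_def)
  finally show ?thesis by (rule prob_spaceI)
qed

lemma measurable_cond_kernel: "cond_kernel \<in> marg_snd \<rightarrow>\<^sub>M prob_algebra borel"
proof (rule measurable_prob_algebra_generated[where \<Omega> = UNIV and G = gen_algebra])
  fix A assume A: "A \<in> gen_algebra"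
  have "(\<lambda>y. emeasure (cond_kernel y) A) =
      (\<lambda>y. if y \<in> exceptional_set then emeasure marg_fst A else cond_prob A y)"
    using emeasure_cond_kernel[OF _ A] by (auto simp: cond_kernel_def)
  also have "\<dots> \<in> borel_measurable marg_snd"
    by (rule measurable_If_set) (auto simp: exceptional_set_in_sets)
  finally show "(\<lambda>y. emeasure (cond_kernel y) A) \<in> borel_measurable marg_snd" .
qed (auto simp: sigma_gen_algebra Int_stable_gen_algebra prob_space_cond_kernel)

lemma disintegration_cond_kernel:
  assumes A: "A \<in> sets borel" and B: "B \<in> sets borel"
  shows "emeasure P (A \<times> B) = (\<integral>\<^sup>+ y \<in> B. emeasure (cond_kernel y) A \<partial>marg_snd)"
proof -
  define M1 where "M1 = distr (density P (indicator (UNIV \<times> B))) borel fst"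
  define M2 where "M2 = density marg_snd (indicator B) \<bind> cond_kernel"
  have kernel: "cond_kernel \<in> density marg_snd (indicator B) \<rightarrow>\<^sub>M subprob_algebra borel"
    using measurable_prob_algebraD[OF measurable_cond_kernel] by (simp cong: measurable_cong_sets)
  have M1: "emeasure M1 S = emeasure P (S \<times> B)" if S: "S \<in> sets borel" for S
  proof -
    have "emeasure M1 S = (\<integral>\<^sup>+ x. indicator (UNIV \<times> B) x * indicator (fst -` S) x \<partial>P)"
      unfolding M1_def using S B
      by (subst emeasure_distr) (auto simp: measurable_fst_borel emeasure_density vimage_fst)
    also have "\<dots> = (\<integral>\<^sup>+ x. indicator (S \<times> B) x \<partial>P)"
      by (intro nn_integral_cong) (auto split: split_indicator)
    finally show ?thesis using S B by simp
  qed
  have M2: "emeasure M2 S = (\<integral>\<^sup>+ y \<in> B. emeasure (cond_kernel y) S \<partial>marg_snd)" if S: "S \<in> sets borel" for S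
  proof -
    have "emeasure M2 S = (\<integral>\<^sup>+ y. emeasure (cond_kernel y) S \<partial>density marg_snd (indicator B))"
      unfolding M2_def using S by (intro emeasure_bind[OF _ kernel]) auto
    also have "\<dots> = (\<integral>\<^sup>+ y. indicator B y * emeasure (cond_kernel y) S \<partial>marg_snd)"
      using B S measurable_prob_algebraD[OF measurable_cond_kernel]
      by (subst nn_integral_density) (auto intro: measurable_emeasure_subprob_algebra)
    finally show ?thesis by (simp add: mult.commute)
  qed
  have "M1 = M2"
  proof (rule measure_eqI_generator_eq[where E = gen_algebra and \<Omega> = UNIV and A = "\<lambda>_. UNIV"])
    fix X assume X: "X \<in> gen_algebra"
    have "AE y in marg_snd. y \<notin> exceptional_set" using exceptional_set(2) by (rule AE_not_in)
    then have "(\<integral>\<^sup>+ y \<in> B. emeasure (cond_kernel y) X \<partial>marg_snd) = (\<integral>\<^sup>+ y \<in> B. cond_prob X y \<partial>marg_snd)"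
      by (intro nn_integral_cong_AE) (auto simp: emeasure_cond_kernel[OF _ X])
    then show "emeasure M1 X = emeasure M2 X"
      using X B gen_algebra_in_sets by (simp add: M1 M2 nn_integral_cond_prob)
  next
    show "sets M1 = sigma_sets UNIV gen_algebra" by (simp add: M1_def sigma_gen_algebra)
    show "sets M2 = sigma_sets UNIV gen_algebra"
      unfolding M2_def by (subst sets_bind[where N = borel]) (simp_all add: sigma_gen_algebra)
    show "emeasure M1 UNIV \<noteq> \<infinity>"
      using M1[of UNIV] emeasure_le_1[of "UNIV \<times> B"] by (auto simp: top_unique)
  qed (auto simp: Int_stable_gen_algebra UNIV_in_gen_algebra)
  then show ?thesis using M1[OF A] M2[OF A] by simp
qed

end

lemma borel_disintegration:
  fixes P :: "('a::polish_space \<times> 'b::second_countable_topology) measure"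
  assumes "sets P = sets borel" and "prob_space P"
  obtains \<kappa> where "\<kappa> \<in> distr P borel snd \<rightarrow>\<^sub>M prob_algebra borel"
    and "\<And>A B. A \<in> sets borel \<Longrightarrow> B \<in> sets borel \<Longrightarrow>
      emeasure P (A \<times> B) = (\<integral>\<^sup>+ y \<in> B. emeasure (\<kappa> y) A \<partial>distr P borel snd)"
proof -
  interpret borel_pair_prob P by (rule borel_pair_prob.intro[OF assms(2)]) (unfold_locales, fact)
  show ?thesis
    using that measurable_cond_kernel disintegration_cond_kernel by (simp add: marg_snd_def)
qed

section \<open>Gluing\<close>

context
  fixes \<kappa> :: "'b::second_countable_topology \<Rightarrow> 'a::second_countable_topology measure"
    and Q :: "('b \<times> 'c::second_countable_topology) measure"
  assumes sets_Q: "sets Q = sets borel" and prob_space_Q: "prob_space Q"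
    and kernel: "\<kappa> \<in> distr Q borel fst \<rightarrow>\<^sub>M prob_algebra borel"
begin

definition glue :: "('a \<times> ('b \<times> 'c)) measure" where
  "glue = Q \<bind> (\<lambda>p. distr (\<kappa> (fst p)) borel (\<lambda>x. (x, p)))"

lemma prob_space_kernel: "prob_space (\<kappa> y)" and sets_kernel: "sets (\<kappa> y) = sets borel"
  using measurable_space[OF kernel, of y] by (auto simp: space_prob_algebra)

lemma measurable_glue_kernel:
  "(\<lambda>p. distr (\<kappa> (fst p)) borel (\<lambda>x. (x, p))) \<in> Q \<rightarrow>\<^sub>M subprob_algebra borel"
proof (rule measurable_distr2[where f = "\<lambda>p x. (x, p)"])
  have "sets (Q \<Otimes>\<^sub>M (borel :: 'a measure)) = sets (borel :: (('b \<times> 'c) \<times> 'a) measure)"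
    using sets_Q by (simp add: borel_prod[symmetric] cong: sets_pair_measure_cong)
  moreover have "(\<lambda>(p, x). (x, p)) \<in> (borel :: (('b \<times> 'c) \<times> 'a) measure) \<rightarrow>\<^sub>M (borel :: ('a \<times> ('b \<times> 'c)) measure)"
    unfolding case_prod_beta' by measurable
  ultimately show "(\<lambda>(p, x). (x, p)) \<in> Q \<Otimes>\<^sub>M (borel :: 'a measure) \<rightarrow>\<^sub>M (borel :: ('a \<times> ('b \<times> 'c)) measure)"
    by (simp cong: measurable_cong_sets)
  have "fst \<in> Q \<rightarrow>\<^sub>M distr Q borel fst"
    using measurable_fst_borel by (simp cong: measurable_cong_sets add: sets_Q)
  then show "(\<lambda>p. \<kappa> (fst p)) \<in> Q \<rightarrow>\<^sub>M subprob_algebra borel"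
    using measurable_compose[OF _ measurable_prob_algebraD[OF kernel]] by (simp add: comp_def)
qed

lemma sets_glue: "sets glue = sets borel"
  unfolding glue_def by (subst sets_bind[where N = borel]) (simp_all add: space_eq_UNIV_if_sets_borel[OF sets_Q])

lemma space_glue[simp]: "space glue = UNIV"
  by (rule space_eq_UNIV_if_sets_borel[OF sets_glue])

lemma emeasure_glue:
  "S \<in> sets borel \<Longrightarrow> emeasure glue S = (\<integral>\<^sup>+ p. emeasure (distr (\<kappa> (fst p)) borel (\<lambda>x. (x, p))) S \<partial>Q)"
  unfolding glue_def
  by (rule emeasure_bind[OF _ measurable_glue_kernel]) (simp_all add: space_eq_UNIV_if_sets_borel[OF sets_Q])

lemma prob_space_glue: "prob_space glue"
proof
  have "emeasure (distr (\<kappa> (fst p)) borel (\<lambda>x. (x, p))) UNIV = 1" for p :: "'b \<times> 'c"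
  proof -
    have "(\<lambda>x. (x, p)) \<in> (borel :: 'a measure) \<rightarrow>\<^sub>M borel" by measurable
    then have "prob_space (distr (\<kappa> (fst p)) borel (\<lambda>x. (x, p)))"
      by (intro prob_space.prob_space_distr[OF prob_space_kernel]) (simp add: sets_kernel cong: measurable_cong_sets)
    then show ?thesis using prob_space.emeasure_space_1 by fastforce
  qed
  then have "emeasure glue UNIV = (\<integral>\<^sup>+ p. 1 \<partial>Q)" by (simp add: emeasure_glue)
  then show "emeasure glue (space glue) = 1"
    using prob_space.emeasure_space_1[OF prob_space_Q] space_eq_UNIV_if_sets_borel[OF sets_Q] by simp
qed

lemma distr_glue_snd: "distr glue borel snd = Q"
proof -
  have "distr glue borel snd = Q \<bind> (\<lambda>p. distr (distr (\<kappa> (fst p)) borel (\<lambda>x. (x, p))) borel snd)"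
    unfolding glue_def
    by (rule distr_bind[OF measurable_glue_kernel]) (simp_all add: space_eq_UNIV_if_sets_borel[OF sets_Q])
  also have "\<dots> = Q \<bind> return borel"
  proof (rule bind_cong[OF refl])
    fix p :: "'b \<times> 'c"
    have "distr (distr (\<kappa> (fst p)) borel (\<lambda>x. (x, p))) borel snd = distr (\<kappa> (fst p)) borel (\<lambda>x. p)"
      by (subst distr_distr) (auto simp: sets_kernel comp_def cong: measurable_cong_sets)
    also have "\<dots> = return borel p" by (rule prob_space.distr_const[OF prob_space_kernel]) simp
    finally show "distr (distr (\<kappa> (fst p)) borel (\<lambda>x. (x, p))) borel snd = return borel p" .
  qed
  also have "\<dots> = Q" by (rule bind_return''[OF sets_Q])
  finally show ?thesis .
qed

lemma emeasure_glue_vimage_Times: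
  assumes A: "A \<in> sets borel" and B: "B \<in> sets borel"
  shows "emeasure glue ((\<lambda>(x, p). (x, fst p)) -` (A \<times> B)) =
    (\<integral>\<^sup>+ y \<in> B. emeasure (\<kappa> y) A \<partial>distr Q borel fst)"
proof -
  let ?h = "\<lambda>(x :: 'a, p :: 'b \<times> 'c). (x, fst p)"
  have h: "?h \<in> (borel :: ('a \<times> ('b \<times> 'c)) measure) \<rightarrow>\<^sub>M (borel :: ('a \<times> 'b) measure)"
    unfolding case_prod_beta' by measurable
  have "emeasure glue (?h -` (A \<times> B)) = (\<integral>\<^sup>+ p. emeasure (\<kappa> (fst p)) A * indicator B (fst p) \<partial>Q)"
  proof -
    have "?h -` (A \<times> B) \<in> sets borel" using measurable_sets[OF h, of "A \<times> B"] A B by simp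
    moreover have "emeasure (distr (\<kappa> (fst p)) borel (\<lambda>x. (x, p))) (?h -` (A \<times> B)) =
        emeasure (\<kappa> (fst p)) A * indicator B (fst p)" for p
    proof -
      have "(\<lambda>x. (x, p)) -` ?h -` (A \<times> B) = (if fst p \<in> B then A else {})" by auto
      then show ?thesis using A B measurable_sets[OF h, of "A \<times> B"]
        by (subst emeasure_distr)
          (auto simp: sets_kernel space_eq_UNIV_if_sets_borel cong: measurable_cong_sets split: split_indicator)
    qed
    ultimately show ?thesis by (simp add: emeasure_glue)
  qed
  also have "\<dots> = (\<integral>\<^sup>+ y. emeasure (\<kappa> y) A * indicator B y \<partial>distr Q borel fst)"
  proof -
    have "(\<lambda>y. emeasure (\<kappa> y) A) \<in> borel_measurable (distr Q borel fst)"
      using measurable_compose[OF measurable_prob_algebraD[OF kernel] measurable_emeasure_subprob_algebra[OF A]]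
      by (simp add: comp_def)
    then have "(\<lambda>y. emeasure (\<kappa> y) A * indicator B y) \<in> borel_measurable (distr Q borel fst)"
      using B by measurable
    then show ?thesis
      using measurable_fst_borel by (subst nn_integral_distr) (simp_all add: sets_Q cong: measurable_cong_sets)
  qed
  finally show ?thesis by (simp add: mult.commute)
qed

end

lemma exists_gluing:
  fixes P1 :: "('a::polish_space \<times> 'b::second_countable_topology) measure"
    and P2 :: "('b \<times> 'c::second_countable_topology) measure"
  assumes sets_P1: "sets P1 = sets borel" and prob_P1: "prob_space P1"
    and sets_P2: "sets P2 = sets borel" and prob_P2: "prob_space P2"
    and marg: "distr P1 borel snd = distr P2 borel fst"
  obtains G :: "('a \<times> ('b \<times> 'c)) measure" where "sets G = sets borel" "prob_space G"
    "distr G borel (\<lambda>(x, p). (x, fst p)) = P1" "distr G borel snd = P2"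
proof -
  obtain \<kappa> where kernel: "\<kappa> \<in> distr P2 borel fst \<rightarrow>\<^sub>M prob_algebra borel"
    and disint: "\<And>A B. A \<in> sets borel \<Longrightarrow> B \<in> sets borel \<Longrightarrow>
      emeasure P1 (A \<times> B) = (\<integral>\<^sup>+ y \<in> B. emeasure (\<kappa> y) A \<partial>distr P2 borel fst)"
    by (rule borel_disintegration[OF sets_P1 prob_P1, unfolded marg]) auto
  let ?G = "glue \<kappa> P2"
  have h: "(\<lambda>(x, p). (x, fst p)) \<in> ?G \<rightarrow>\<^sub>M (borel :: ('a \<times> 'b) measure)"
    using sets_glue[OF sets_P2 prob_P2 kernel] unfolding case_prod_beta'
    by (simp cong: measurable_cong_sets)
  have "distr ?G borel (\<lambda>(x, p). (x, fst p)) = P1"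
  proof (rule borel_measure_eqI_rectangles)
    show "emeasure (distr ?G borel (\<lambda>(x, p). (x, fst p))) UNIV \<noteq> \<infinity>"
      using prob_space.emeasure_le_1[OF prob_space.prob_space_distr[OF prob_space_glue[OF sets_P2 prob_P2 kernel] h], of UNIV]
      by (auto simp: top_unique)
  next
    fix A :: "'a set" and B :: "'b set" assume "A \<in> sets borel" "B \<in> sets borel"
    then show "emeasure (distr ?G borel (\<lambda>(x, p). (x, fst p))) (A \<times> B) = emeasure P1 (A \<times> B)"
      using h
      by (simp add: emeasure_distr space_glue[OF sets_P2 prob_P2 kernel]
          emeasure_glue_vimage_Times[OF sets_P2 prob_P2 kernel] disint)
  qed (simp_all add: sets_P1)
  then show ?thesis
    by (rule that[OF sets_glue[OF sets_P2 prob_P2 kernel] prob_space_glue[OF sets_P2 prob_P2 kernel] _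
          distr_glue_snd[OF sets_P2 prob_P2 kernel]])
qed

section \<open>The network Gromov-Prokhorov distance\<close>

lemma measure_pair_distr_vimage:
  fixes f :: "'a \<Rightarrow> 'b::second_countable_topology"
  assumes f: "f \<in> M \<rightarrow>\<^sub>M borel" and M: "prob_space M" and B: "B \<in> sets (borel :: ('b \<times> 'b) measure)"
  shows "measure (distr M borel f \<Otimes>\<^sub>M distr M borel f) B =
    measure (M \<Otimes>\<^sub>M M) ((\<lambda>(x, x'). (f x, f x')) -` B \<inter> space (M \<Otimes>\<^sub>M M))"
proof -
  have "distr M borel f \<Otimes>\<^sub>M distr M borel f = distr (M \<Otimes>\<^sub>M M) (borel \<Otimes>\<^sub>M borel) (\<lambda>(x, x'). (f x, f x'))"
    by (rule pair_measure_distr[OF f f prob_space_imp_sigma_finite[OF prob_space.prob_space_distr[OF M f]]])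
  moreover have "(\<lambda>(x, x'). (f x, f x')) \<in> M \<Otimes>\<^sub>M M \<rightarrow>\<^sub>M borel \<Otimes>\<^sub>M borel"
    using f by measurable
  moreover have "B \<in> sets (borel \<Otimes>\<^sub>M borel)" using B sets_borel_prod by metis
  ultimately show ?thesis by (simp add: measure_distr)
qed

lemma cInf_le_add:
  fixes R S T :: "real set"
  assumes "R \<noteq> {}" "S \<noteq> {}" "bdd_below T" and le: "\<And>r s. r \<in> R \<Longrightarrow> s \<in> S \<Longrightarrow> \<exists>t\<in>T. t \<le> r + s"
  shows "Inf T \<le> Inf R + Inf S"
proof -
  have "Inf T - s \<le> Inf R" if s: "s \<in> S" for s
  proof (rule cInf_greatest[OF \<open>R \<noteq> {}\<close>])
    fix r assume "r \<in> R"
    then obtain t where "t \<in> T" "t \<le> r + s" using le s by blast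
    then show "Inf T - s \<le> r" using cInf_lower[OF _ \<open>bdd_below T\<close>] by fastforce
  qed
  then have "Inf T - Inf R \<le> Inf S" by (intro cInf_greatest[OF \<open>S \<noteq> {}\<close>]) (auto simp: algebra_simps)
  then show ?thesis by simp
qed

lemma le_abs_diff_split: "(e1::real) + e2 \<le> \<bar>a - c\<bar> \<Longrightarrow> e1 \<le> \<bar>a - b\<bar> \<or> e2 \<le> \<bar>b - c\<bar>"
  by (cases "a \<le> b"; cases "b \<le> c"; cases "a \<le> c") (auto simp: abs_if split: if_splits)

lemma measure_networkD:
  assumes "measure_network \<omega> \<mu>"
  shows "sets \<mu> = sets borel" "prob_space \<mu>" "(\<lambda>(x, y). \<omega> x y) \<in> borel_measurable borel"
    "\<exists>C. \<forall>x y. \<bar>\<omega> x y\<bar> \<le> C"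
  using assms by (auto simp: measure_network_def)

lemma couplingsD:
  assumes "\<pi> \<in> couplings \<mu>X \<mu>Y"
  shows "sets \<pi> = sets borel" "prob_space \<pi>" "distr \<pi> borel fst = \<mu>X" "distr \<pi> borel snd = \<mu>Y"
  using assms by (auto simp: couplings_def)

definition bad_pairs :: "('a \<Rightarrow> 'a \<Rightarrow> real) \<Rightarrow> ('b \<Rightarrow> 'b \<Rightarrow> real) \<Rightarrow> real \<Rightarrow> (('a \<times> 'b) \<times> ('a \<times> 'b)) set"
  where "bad_pairs \<omega>X \<omega>Y \<epsilon> = {((x, y), (x', y')). \<epsilon> \<le> \<bar>\<omega>X x x' - \<omega>Y y y'\<bar>}"

definition gp_radii :: "real \<Rightarrow> ('a \<Rightarrow> 'a \<Rightarrow> real) \<Rightarrow> ('b \<Rightarrow> 'b \<Rightarrow> real) \<Rightarrow> ('a \<times> 'b) measure \<Rightarrow> real set"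
  where "gp_radii \<alpha> \<omega>X \<omega>Y \<pi> = {\<epsilon>. \<epsilon> > 0 \<and> measure (\<pi> \<Otimes>\<^sub>M \<pi>) (bad_pairs \<omega>X \<omega>Y \<epsilon>) \<le> \<alpha> * \<epsilon>}"

definition gp_cost :: "real \<Rightarrow> ('a \<Rightarrow> 'a \<Rightarrow> real) \<Rightarrow> ('b \<Rightarrow> 'b \<Rightarrow> real) \<Rightarrow> ('a \<times> 'b) measure \<Rightarrow> real"
  where "gp_cost \<alpha> \<omega>X \<omega>Y \<pi> = Inf (gp_radii \<alpha> \<omega>X \<omega>Y \<pi>)"

lemma dNGP_eq_INF_gp_cost:
  "dNGP \<alpha> \<omega>X \<mu>X \<omega>Y \<mu>Y = 1/2 * (INF \<pi>\<in>couplings \<mu>X \<mu>Y. gp_cost \<alpha> \<omega>X \<omega>Y \<pi>)"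
  unfolding dNGP_def gp_cost_def gp_radii_def bad_pairs_def ..

lemma bad_pairs_in_sets:
  fixes \<omega>X :: "'a::second_countable_topology \<Rightarrow> 'a \<Rightarrow> real" and \<omega>Y :: "'b::second_countable_topology \<Rightarrow> 'b \<Rightarrow> real"
  assumes "(\<lambda>(x, x'). \<omega>X x x') \<in> borel_measurable borel" and "(\<lambda>(y, y'). \<omega>Y y y') \<in> borel_measurable borel"
  shows "bad_pairs \<omega>X \<omega>Y \<epsilon> \<in> sets borel"
proof -
  have "(\<lambda>z. \<omega>X (fst (fst z)) (fst (snd z))) \<in> borel_measurable (borel :: (('a \<times> 'b) \<times> ('a \<times> 'b)) measure)"
    "(\<lambda>z. \<omega>Y (snd (fst z)) (snd (snd z))) \<in> borel_measurable (borel :: (('a \<times> 'b) \<times> ('a \<times> 'b)) measure)"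
  proof -
    have X: "(\<lambda>z. (fst (fst z), fst (snd z))) \<in> (borel :: (('a \<times> 'b) \<times> ('a \<times> 'b)) measure) \<rightarrow>\<^sub>M borel"
      and Y: "(\<lambda>z. (snd (fst z), snd (snd z))) \<in> (borel :: (('a \<times> 'b) \<times> ('a \<times> 'b)) measure) \<rightarrow>\<^sub>M borel"
      by measurable
    show "(\<lambda>z. \<omega>X (fst (fst z)) (fst (snd z))) \<in> borel_measurable (borel :: (('a \<times> 'b) \<times> ('a \<times> 'b)) measure)"
      using measurable_compose[OF X assms(1)] by (simp add: comp_def)
    show "(\<lambda>z. \<omega>Y (snd (fst z)) (snd (snd z))) \<in> borel_measurable (borel :: (('a \<times> 'b) \<times> ('a \<times> 'b)) measure)"
      using measurable_compose[OF Y assms(2)] by (simp add: comp_def)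
  qed
  then have "{z \<in> space borel. \<epsilon> \<le> \<bar>\<omega>X (fst (fst z)) (fst (snd z)) - \<omega>Y (snd (fst z)) (snd (snd z))\<bar>}
      \<in> sets (borel :: (('a \<times> 'b) \<times> ('a \<times> 'b)) measure)"
    by measurable
  also have "{z \<in> space borel. \<epsilon> \<le> \<bar>\<omega>X (fst (fst z)) (fst (snd z)) - \<omega>Y (snd (fst z)) (snd (snd z))\<bar>} =
      bad_pairs \<omega>X \<omega>Y \<epsilon>"
    by (auto simp: bad_pairs_def)
  finally show ?thesis .
qed

lemma gp_radii_nonempty:
  assumes "\<And>x x'. \<bar>\<omega>X x x'\<bar> \<le> CX" and "\<And>y y'. \<bar>\<omega>Y y y'\<bar> \<le> CY" and "\<alpha> \<ge> 0"
  shows "gp_radii \<alpha> \<omega>X \<omega>Y \<pi> \<noteq> {}"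
proof -
  have "\<bar>\<omega>X x x' - \<omega>Y y y'\<bar> < \<bar>CX\<bar> + \<bar>CY\<bar> + 1" for x x' y y'
    using assms(1)[of x x'] assms(2)[of y y'] by linarith
  then have "bad_pairs \<omega>X \<omega>Y (\<bar>CX\<bar> + \<bar>CY\<bar> + 1) = {}" by (auto simp: bad_pairs_def not_le)
  then have "\<bar>CX\<bar> + \<bar>CY\<bar> + 1 \<in> gp_radii \<alpha> \<omega>X \<omega>Y \<pi>"
    using \<open>\<alpha> \<ge> 0\<close> by (simp add: gp_radii_def add_pos_nonneg)
  then show ?thesis by blast
qed

lemma gp_cost_nonneg: "gp_radii \<alpha> \<omega>X \<omega>Y \<pi> \<noteq> {} \<Longrightarrow> 0 \<le> gp_cost \<alpha> \<omega>X \<omega>Y \<pi>"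
  unfolding gp_cost_def by (rule cInf_greatest) (auto simp: gp_radii_def)

lemma bdd_below_gp_radii: "bdd_below (gp_radii \<alpha> \<omega>X \<omega>Y \<pi>)"
  by (rule bdd_belowI[of _ 0]) (simp add: gp_radii_def)

lemma product_in_couplings:
  fixes \<mu>X :: "'a::polish_space measure" and \<mu>Y :: "'b::polish_space measure"
  assumes sX: "sets \<mu>X = sets borel" and pX: "prob_space \<mu>X"
    and sY: "sets \<mu>Y = sets borel" and pY: "prob_space \<mu>Y"
  shows "\<mu>X \<Otimes>\<^sub>M \<mu>Y \<in> couplings \<mu>X \<mu>Y"
proof -
  have sP: "sets (\<mu>X \<Otimes>\<^sub>M \<mu>Y) = sets borel"
    using sets_pair_measure_cong[OF sX sY] sets_borel_prod by metis
  have "distr (\<mu>X \<Otimes>\<^sub>M \<mu>Y) borel fst = distr (\<mu>X \<Otimes>\<^sub>M \<mu>Y) \<mu>X fst"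
    using sX by (intro distr_cong) simp_all
  also have "\<dots> = \<mu>X" by (rule prob_space.distr_pair_fst[OF pY])
  finally have fst: "distr (\<mu>X \<Otimes>\<^sub>M \<mu>Y) borel fst = \<mu>X" .
  have "distr (\<mu>X \<Otimes>\<^sub>M \<mu>Y) borel snd = \<mu>Y"
  proof (rule measure_eqI)
    fix B assume "B \<in> sets (distr (\<mu>X \<Otimes>\<^sub>M \<mu>Y) borel snd)"
    then have B: "B \<in> sets \<mu>Y" using sY by simp
    have "emeasure (distr (\<mu>X \<Otimes>\<^sub>M \<mu>Y) borel snd) B = emeasure (\<mu>X \<Otimes>\<^sub>M \<mu>Y) (space \<mu>X \<times> B)"
      using B sets.sets_into_space[OF B]
      by (subst emeasure_distr) (auto simp: sY space_pair_measure cong: measurable_cong_sets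
          intro!: arg_cong2[where f = emeasure])
    also have "\<dots> = emeasure \<mu>Y B"
      using B by (simp add: sigma_finite_measure.emeasure_pair_measure_Times[OF prob_space_imp_sigma_finite[OF pY]]
          prob_space.emeasure_space_1[OF pX])
    finally show "emeasure (distr (\<mu>X \<Otimes>\<^sub>M \<mu>Y) borel snd) B = emeasure \<mu>Y B" .
  qed (simp add: sY)
  then show ?thesis using sP fst prob_space_pair[OF pX pY] by (simp add: couplings_def)
qed

lemma swap_in_couplings:
  assumes "\<pi> \<in> couplings \<mu>X \<mu>Y"
  shows "distr \<pi> borel (\<lambda>(x, y). (y, x)) \<in> couplings \<mu>Y \<mu>X"
proof -
  note \<pi> = couplingsD[OF assms]
  have swap: "(\<lambda>(x, y). (y, x)) \<in> \<pi> \<rightarrow>\<^sub>M borel"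
    using \<pi>(1) unfolding case_prod_beta' by (simp cong: measurable_cong_sets)
  have "distr (distr \<pi> borel (\<lambda>(x, y). (y, x))) borel fst = \<mu>Y"
    "distr (distr \<pi> borel (\<lambda>(x, y). (y, x))) borel snd = \<mu>X"
    using swap \<pi>(3,4) by (simp_all add: distr_distr comp_def case_prod_beta')
  then show ?thesis
    using prob_space.prob_space_distr[OF \<pi>(2) swap] by (simp add: couplings_def)
qed

lemma gp_cost_swap:
  fixes \<omega>X :: "'a::polish_space \<Rightarrow> 'a \<Rightarrow> real" and \<omega>Y :: "'b::polish_space \<Rightarrow> 'b \<Rightarrow> real"
  assumes mX: "(\<lambda>(x, x'). \<omega>X x x') \<in> borel_measurable borel"
    and mY: "(\<lambda>(y, y'). \<omega>Y y y') \<in> borel_measurable borel"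
    and \<pi>: "\<pi> \<in> couplings \<mu>X \<mu>Y"
  shows "gp_cost \<alpha> \<omega>Y \<omega>X (distr \<pi> borel (\<lambda>(x, y). (y, x))) = gp_cost \<alpha> \<omega>X \<omega>Y \<pi>"
proof -
  note \<pi> = couplingsD[OF \<pi>]
  have swap: "(\<lambda>(x, y). (y, x)) \<in> \<pi> \<rightarrow>\<^sub>M (borel :: ('b \<times> 'a) measure)"
    using \<pi>(1) unfolding case_prod_beta' by (simp cong: measurable_cong_sets)
  have "measure (distr \<pi> borel (\<lambda>(x, y). (y, x)) \<Otimes>\<^sub>M distr \<pi> borel (\<lambda>(x, y). (y, x))) (bad_pairs \<omega>Y \<omega>X \<epsilon>) =
      measure (\<pi> \<Otimes>\<^sub>M \<pi>) (bad_pairs \<omega>X \<omega>Y \<epsilon>)" for \<epsilon>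
    using measure_pair_distr_vimage[OF swap \<pi>(2) bad_pairs_in_sets[OF mY mX]] \<pi>(1)
    by (simp add: space_pair_measure space_eq_UNIV_if_sets_borel bad_pairs_def abs_minus_commute
        vimage_def case_prod_beta')
  then show ?thesis by (simp add: gp_cost_def gp_radii_def)
qed

lemma diagonal_in_couplings:
  assumes "sets \<mu> = sets borel" "prob_space \<mu>"
  shows "distr \<mu> borel (\<lambda>x. (x, x)) \<in> couplings \<mu> \<mu>"
proof -
  have diag: "(\<lambda>x. (x, x)) \<in> \<mu> \<rightarrow>\<^sub>M borel" using assms(1) by (simp cong: measurable_cong_sets)
  have "distr \<mu> borel (\<lambda>x. x) = distr \<mu> \<mu> (\<lambda>x. x)" using assms(1) by (intro distr_cong) simp_all
  also have "\<dots> = \<mu>" by (rule distr_id)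
  finally have "distr \<mu> borel (\<lambda>x. x) = \<mu>" .
  then show ?thesis
    using diag prob_space.prob_space_distr[OF assms(2) diag] by (simp add: couplings_def distr_distr comp_def)
qed

lemma gp_cost_diagonal:
  fixes \<omega> :: "'a::polish_space \<Rightarrow> 'a \<Rightarrow> real"
  assumes m: "(\<lambda>(x, x'). \<omega> x x') \<in> borel_measurable borel"
    and "sets \<mu> = sets borel" "prob_space \<mu>" "\<alpha> \<ge> 0"
  shows "gp_cost \<alpha> \<omega> \<omega> (distr \<mu> borel (\<lambda>x. (x, x))) = 0"
proof -
  have diag: "(\<lambda>x. (x, x)) \<in> \<mu> \<rightarrow>\<^sub>M borel" using assms(2) by (simp cong: measurable_cong_sets)
  have "measure (distr \<mu> borel (\<lambda>x. (x, x)) \<Otimes>\<^sub>M distr \<mu> borel (\<lambda>x. (x, x))) (bad_pairs \<omega> \<omega> \<epsilon>) = 0"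
    if "\<epsilon> > 0" for \<epsilon>
    using measure_pair_distr_vimage[OF diag assms(3) bad_pairs_in_sets[OF m m]] that
    by (simp add: bad_pairs_def vimage_def case_prod_beta')
  then have "gp_radii \<alpha> \<omega> \<omega> (distr \<mu> borel (\<lambda>x. (x, x))) = {0<..}"
    using \<open>\<alpha> \<ge> 0\<close> by (auto simp: gp_radii_def)
  then show ?thesis by (simp add: gp_cost_def)
qed

lemma vimage_pair_map_in_sets:
  fixes f :: "'a \<Rightarrow> 'b::second_countable_topology"
  assumes f: "f \<in> M \<rightarrow>\<^sub>M borel" and B: "B \<in> sets (borel :: ('b \<times> 'b) measure)"
  shows "(\<lambda>(x, x'). (f x, f x')) -` B \<inter> space (M \<Otimes>\<^sub>M M) \<in> sets (M \<Otimes>\<^sub>M M)"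
proof (rule measurable_sets[OF _ B])
  show "(\<lambda>(x, x'). (f x, f x')) \<in> M \<Otimes>\<^sub>M M \<rightarrow>\<^sub>M borel"
    unfolding case_prod_beta'
    by (intro measurable_Pair_borel measurable_compose[OF measurable_fst f] measurable_compose[OF measurable_snd f])
qed

lemma measure_bad_pairs_glued_le:
  fixes G :: "('a::polish_space \<times> ('b::polish_space \<times> 'c::polish_space)) measure"
    and \<omega>X :: "'a \<Rightarrow> 'a \<Rightarrow> real" and \<omega>Y :: "'b \<Rightarrow> 'b \<Rightarrow> real" and \<omega>Z :: "'c \<Rightarrow> 'c \<Rightarrow> real"
  assumes mX: "(\<lambda>(x, x'). \<omega>X x x') \<in> borel_measurable borel"
    and mY: "(\<lambda>(y, y'). \<omega>Y y y') \<in> borel_measurable borel"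
    and mZ: "(\<lambda>(z, z'). \<omega>Z z z') \<in> borel_measurable borel"
    and sets_G: "sets G = sets borel" and prob_G: "prob_space G"
    and G1: "distr G borel (\<lambda>(x, p). (x, fst p)) = \<pi>1" and G2: "distr G borel snd = \<pi>2"
  shows "measure (distr G borel (\<lambda>(x, p). (x, snd p)) \<Otimes>\<^sub>M distr G borel (\<lambda>(x, p). (x, snd p)))
      (bad_pairs \<omega>X \<omega>Z (e1 + e2))
    \<le> measure (\<pi>1 \<Otimes>\<^sub>M \<pi>1) (bad_pairs \<omega>X \<omega>Y e1) + measure (\<pi>2 \<Otimes>\<^sub>M \<pi>2) (bad_pairs \<omega>Y \<omega>Z e2)"
proof -
  interpret GG: prob_space "G \<Otimes>\<^sub>M G" by (rule prob_space_pair[OF prob_G prob_G])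
  let ?h1 = "\<lambda>(x :: 'a, p :: 'b \<times> 'c). (x, fst p)" and ?h2 = "snd :: 'a \<times> ('b \<times> 'c) \<Rightarrow> 'b \<times> 'c"
    and ?j = "\<lambda>(x :: 'a, p :: 'b \<times> 'c). (x, snd p)"
  have h1: "?h1 \<in> G \<rightarrow>\<^sub>M borel" and h2: "?h2 \<in> G \<rightarrow>\<^sub>M borel" and j: "?j \<in> G \<rightarrow>\<^sub>M borel"
    using sets_G unfolding case_prod_beta' by (simp_all cong: measurable_cong_sets)
  let ?H1 = "(\<lambda>(u, u'). (?h1 u, ?h1 u')) -` bad_pairs \<omega>X \<omega>Y e1 \<inter> space (G \<Otimes>\<^sub>M G)"
    and ?H2 = "(\<lambda>(u, u'). (?h2 u, ?h2 u')) -` bad_pairs \<omega>Y \<omega>Z e2 \<inter> space (G \<Otimes>\<^sub>M G)"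
    and ?J = "(\<lambda>(u, u'). (?j u, ?j u')) -` bad_pairs \<omega>X \<omega>Z (e1 + e2) \<inter> space (G \<Otimes>\<^sub>M G)"
  have H1: "?H1 \<in> sets (G \<Otimes>\<^sub>M G)" by (rule vimage_pair_map_in_sets[OF h1 bad_pairs_in_sets[OF mX mY]])
  have H2: "?H2 \<in> sets (G \<Otimes>\<^sub>M G)" by (rule vimage_pair_map_in_sets[OF h2 bad_pairs_in_sets[OF mY mZ]])
  have "?J \<subseteq> ?H1 \<union> ?H2"
    by (auto simp: bad_pairs_def dest: le_abs_diff_split)
  then have "measure (G \<Otimes>\<^sub>M G) ?J \<le> measure (G \<Otimes>\<^sub>M G) ?H1 + measure (G \<Otimes>\<^sub>M G) ?H2"
    using H1 H2 by (meson GG.finite_measure_mono measure_Un_le order_trans sets.Un)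
  then show ?thesis
    using measure_pair_distr_vimage[OF j prob_G bad_pairs_in_sets[OF mX mZ]]
      measure_pair_distr_vimage[OF h1 prob_G bad_pairs_in_sets[OF mX mY]]
      measure_pair_distr_vimage[OF h2 prob_G bad_pairs_in_sets[OF mY mZ]]
    by (simp add: G1 G2)
qed

lemma glued_coupling:
  fixes \<omega>X :: "'a::polish_space \<Rightarrow> 'a \<Rightarrow> real" and \<omega>Y :: "'b::polish_space \<Rightarrow> 'b \<Rightarrow> real"
    and \<omega>Z :: "'c::polish_space \<Rightarrow> 'c \<Rightarrow> real"
  assumes mX: "(\<lambda>(x, x'). \<omega>X x x') \<in> borel_measurable borel"
    and mY: "(\<lambda>(y, y'). \<omega>Y y y') \<in> borel_measurable borel"
    and mZ: "(\<lambda>(z, z'). \<omega>Z z z') \<in> borel_measurable borel"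
    and \<pi>1: "\<pi>1 \<in> couplings \<mu>X \<mu>Y" and \<pi>2: "\<pi>2 \<in> couplings \<mu>Y \<mu>Z"
  obtains \<rho> where "\<rho> \<in> couplings \<mu>X \<mu>Z"
    and "\<And>e1 e2. e1 \<in> gp_radii \<alpha> \<omega>X \<omega>Y \<pi>1 \<Longrightarrow> e2 \<in> gp_radii \<alpha> \<omega>Y \<omega>Z \<pi>2 \<Longrightarrow>
      e1 + e2 \<in> gp_radii \<alpha> \<omega>X \<omega>Z \<rho>"
proof -
  note c1 = couplingsD[OF \<pi>1] and c2 = couplingsD[OF \<pi>2]
  obtain G :: "('a \<times> ('b \<times> 'c)) measure" where G: "sets G = sets borel" "prob_space G"
    and G1: "distr G borel (\<lambda>(x, p). (x, fst p)) = \<pi>1" and G2: "distr G borel snd = \<pi>2"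
    using exists_gluing[OF c1(1,2) c2(1,2)] c1(4) c2(3) by metis
  let ?\<rho> = "distr G borel (\<lambda>(x, p). (x, snd p))"
  have j: "(\<lambda>(x :: 'a, p :: 'b \<times> 'c). (x, snd p)) \<in> G \<rightarrow>\<^sub>M borel"
    and h1: "(\<lambda>(x :: 'a, p :: 'b \<times> 'c). (x, fst p)) \<in> G \<rightarrow>\<^sub>M borel" and h2: "(snd :: _ \<Rightarrow> 'b \<times> 'c) \<in> G \<rightarrow>\<^sub>M borel"
    using G(1) unfolding case_prod_beta' by (simp_all cong: measurable_cong_sets)
  have "distr ?\<rho> borel fst = distr (distr G borel (\<lambda>(x, p). (x, fst p))) borel fst"
    using j h1 by (simp add: distr_distr comp_def case_prod_beta')
  moreover have "distr ?\<rho> borel snd = distr (distr G borel snd) borel snd"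
    using j h2 by (simp add: distr_distr comp_def case_prod_beta')
  ultimately have "?\<rho> \<in> couplings \<mu>X \<mu>Z"
    using prob_space.prob_space_distr[OF G(2) j] c1(3) c2(4) by (simp add: couplings_def G1 G2)
  moreover have "e1 + e2 \<in> gp_radii \<alpha> \<omega>X \<omega>Z ?\<rho>"
    if "e1 \<in> gp_radii \<alpha> \<omega>X \<omega>Y \<pi>1" "e2 \<in> gp_radii \<alpha> \<omega>Y \<omega>Z \<pi>2" for e1 e2
    using measure_bad_pairs_glued_le[OF mX mY mZ G G1 G2, of e1 e2] that
    by (auto simp: gp_radii_def distrib_left)
  ultimately show ?thesis by (rule that)
qed

lemma gp_radii_nonempty_network:
  assumes "measure_network \<omega>X \<mu>X" "measure_network \<omega>Y \<mu>Y" "\<alpha> \<ge> 0"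
  shows "gp_radii \<alpha> \<omega>X \<omega>Y \<pi> \<noteq> {}"
proof -
  obtain CX CY where "\<And>x x'. \<bar>\<omega>X x x'\<bar> \<le> CX" "\<And>y y'. \<bar>\<omega>Y y y'\<bar> \<le> CY"
    using measure_networkD(4)[OF assms(1)] measure_networkD(4)[OF assms(2)] by blast
  then show ?thesis using \<open>\<alpha> \<ge> 0\<close> by (rule gp_radii_nonempty)
qed

lemma gp_cost_nonneg_network:
  assumes "measure_network \<omega>X \<mu>X" "measure_network \<omega>Y \<mu>Y" "\<alpha> \<ge> 0"
  shows "0 \<le> gp_cost \<alpha> \<omega>X \<omega>Y \<pi>"
  by (rule gp_cost_nonneg[OF gp_radii_nonempty_network[OF assms]])

lemma bdd_below_gp_cost:
  assumes "measure_network \<omega>X \<mu>X" "measure_network \<omega>Y \<mu>Y" "\<alpha> \<ge> 0"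
  shows "bdd_below (gp_cost \<alpha> \<omega>X \<omega>Y ` C)"
  using gp_cost_nonneg_network[OF assms] by (intro bdd_belowI[of _ 0]) auto

lemma couplings_nonempty:
  assumes "measure_network \<omega>X \<mu>X" "measure_network \<omega>Y \<mu>Y"
  shows "couplings \<mu>X \<mu>Y \<noteq> {}"
  using product_in_couplings[OF measure_networkD(1,2)[OF assms(1)] measure_networkD(1,2)[OF assms(2)]]
  by blast

lemma dNGP_nonneg:
  assumes "measure_network \<omega>X \<mu>X" "measure_network \<omega>Y \<mu>Y" "\<alpha> \<ge> 0"
  shows "0 \<le> dNGP \<alpha> \<omega>X \<mu>X \<omega>Y \<mu>Y"
  unfolding dNGP_eq_INF_gp_cost
  using couplings_nonempty[OF assms(1,2)] gp_cost_nonneg_network[OF assms]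
  by (simp add: cINF_greatest)

lemma dNGP_self:
  assumes "measure_network \<omega> \<mu>" "\<alpha> \<ge> 0"
  shows "dNGP \<alpha> \<omega> \<mu> \<omega> \<mu> = 0"
proof -
  note N = measure_networkD[OF assms(1)]
  have "(INF \<pi>\<in>couplings \<mu> \<mu>. gp_cost \<alpha> \<omega> \<omega> \<pi>) \<le> gp_cost \<alpha> \<omega> \<omega> (distr \<mu> borel (\<lambda>x. (x, x)))"
    by (rule cINF_lower[OF bdd_below_gp_cost[OF assms(1,1,2)] diagonal_in_couplings[OF N(1,2)]])
  also have "\<dots> = 0" by (rule gp_cost_diagonal[OF N(3,1,2) assms(2)])
  finally show ?thesis using dNGP_nonneg[OF assms(1,1,2)] by (simp add: dNGP_eq_INF_gp_cost)
qed

lemma INF_gp_cost_swap_le: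
  assumes X: "measure_network \<omega>X \<mu>X" and Y: "measure_network \<omega>Y \<mu>Y" and "\<alpha> \<ge> 0"
  shows "(INF \<pi>\<in>couplings \<mu>Y \<mu>X. gp_cost \<alpha> \<omega>Y \<omega>X \<pi>) \<le> (INF \<pi>\<in>couplings \<mu>X \<mu>Y. gp_cost \<alpha> \<omega>X \<omega>Y \<pi>)"
proof (rule cINF_greatest[OF couplings_nonempty[OF X Y]])
  fix \<pi> assume \<pi>: "\<pi> \<in> couplings \<mu>X \<mu>Y"
  show "(INF \<pi>\<in>couplings \<mu>Y \<mu>X. gp_cost \<alpha> \<omega>Y \<omega>X \<pi>) \<le> gp_cost \<alpha> \<omega>X \<omega>Y \<pi>"
    using cINF_lower[OF bdd_below_gp_cost[OF Y X \<open>\<alpha> \<ge> 0\<close>] swap_in_couplings[OF \<pi>]]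
      gp_cost_swap[OF measure_networkD(3)[OF X] measure_networkD(3)[OF Y] \<pi>] by simp
qed

lemma dNGP_commute:
  assumes "measure_network \<omega>X \<mu>X" "measure_network \<omega>Y \<mu>Y" "\<alpha> \<ge> 0"
  shows "dNGP \<alpha> \<omega>X \<mu>X \<omega>Y \<mu>Y = dNGP \<alpha> \<omega>Y \<mu>Y \<omega>X \<mu>X"
  unfolding dNGP_eq_INF_gp_cost
  using INF_gp_cost_swap_le[OF assms] INF_gp_cost_swap_le[OF assms(2,1,3)] by simp

lemma dNGP_triangle:
  assumes X: "measure_network \<omega>X \<mu>X" and Y: "measure_network \<omega>Y \<mu>Y"
    and Z: "measure_network \<omega>Z \<mu>Z" and "\<alpha> \<ge> 0"
  shows "dNGP \<alpha> \<omega>X \<mu>X \<omega>Z \<mu>Z \<le> dNGP \<alpha> \<omega>X \<mu>X \<omega>Y \<mu>Y + dNGP \<alpha> \<omega>Y \<mu>Y \<omega>Z \<mu>Z"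
proof -
  have "Inf (gp_cost \<alpha> \<omega>X \<omega>Z ` couplings \<mu>X \<mu>Z)
      \<le> Inf (gp_cost \<alpha> \<omega>X \<omega>Y ` couplings \<mu>X \<mu>Y) + Inf (gp_cost \<alpha> \<omega>Y \<omega>Z ` couplings \<mu>Y \<mu>Z)"
  proof (rule cInf_le_add)
    fix r s assume "r \<in> gp_cost \<alpha> \<omega>X \<omega>Y ` couplings \<mu>X \<mu>Y" "s \<in> gp_cost \<alpha> \<omega>Y \<omega>Z ` couplings \<mu>Y \<mu>Z"
    then obtain \<pi>1 \<pi>2 where \<pi>: "\<pi>1 \<in> couplings \<mu>X \<mu>Y" "\<pi>2 \<in> couplings \<mu>Y \<mu>Z"
      and rs: "r = gp_cost \<alpha> \<omega>X \<omega>Y \<pi>1" "s = gp_cost \<alpha> \<omega>Y \<omega>Z \<pi>2" by blast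
    obtain \<rho> where \<rho>: "\<rho> \<in> couplings \<mu>X \<mu>Z" and add: "\<And>e1 e2. e1 \<in> gp_radii \<alpha> \<omega>X \<omega>Y \<pi>1 \<Longrightarrow>
        e2 \<in> gp_radii \<alpha> \<omega>Y \<omega>Z \<pi>2 \<Longrightarrow> e1 + e2 \<in> gp_radii \<alpha> \<omega>X \<omega>Z \<rho>"
      using glued_coupling[OF measure_networkD(3)[OF X] measure_networkD(3)[OF Y]
          measure_networkD(3)[OF Z] \<pi>] by metis
    have "gp_cost \<alpha> \<omega>X \<omega>Z \<rho> \<le> r + s"
      unfolding rs gp_cost_def
      using gp_radii_nonempty_network[OF X Y \<open>\<alpha> \<ge> 0\<close>] gp_radii_nonempty_network[OF Y Z \<open>\<alpha> \<ge> 0\<close>]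
        add bdd_below_gp_radii
      by (intro cInf_le_add) auto
    then show "\<exists>t\<in>gp_cost \<alpha> \<omega>X \<omega>Z ` couplings \<mu>X \<mu>Z. t \<le> r + s" using \<rho> by blast
  qed (use couplings_nonempty[OF X Y] couplings_nonempty[OF Y Z] bdd_below_gp_cost[OF X Z \<open>\<alpha> \<ge> 0\<close>] in auto)
  then show ?thesis by (simp add: dNGP_eq_INF_gp_cost)
qed

theorem mainTheorem5:
  fixes \<alpha> :: real
    and \<omega>X :: "'a::polish_space \<Rightarrow> 'a \<Rightarrow> real" and \<mu>X :: "'a measure"
    and \<omega>Y :: "'b::polish_space \<Rightarrow> 'b \<Rightarrow> real" and \<mu>Y :: "'b measure"
    and \<omega>Z :: "'c::polish_space \<Rightarrow> 'c \<Rightarrow> real" and \<mu>Z :: "'c measure"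
  assumes "\<alpha> \<ge> 0"
    and "measure_network \<omega>X \<mu>X"
    and "measure_network \<omega>Y \<mu>Y"
    and "measure_network \<omega>Z \<mu>Z"
  shows "dNGP \<alpha> \<omega>X \<mu>X \<omega>Y \<mu>Y \<ge> 0 \<and>
      dNGP \<alpha> \<omega>X \<mu>X \<omega>X \<mu>X = 0 \<and>
      dNGP \<alpha> \<omega>X \<mu>X \<omega>Y \<mu>Y = dNGP \<alpha> \<omega>Y \<mu>Y \<omega>X \<mu>X \<and>
      dNGP \<alpha> \<omega>X \<mu>X \<omega>Z \<mu>Z \<le> dNGP \<alpha> \<omega>X \<mu>X \<omega>Y \<mu>Y + dNGP \<alpha> \<omega>Y \<mu>Y \<omega>Z \<mu>Z"
  using dNGP_nonneg[OF assms(2,3,1)] dNGP_self[OF assms(2,1)] dNGP_commute[OF assms(2,3,1)]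
    dNGP_triangle[OF assms(2,3,4,1)]
  by blast

end
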